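(* Let $M\ge 2$ be an integer. (Downlink) If $0<P<P_{\mathrm{cross,DL}}:=\frac{4}{M-1}$, then for every integer $K$ with $2\le K\le M$, $$K\log_2\!\left(1+\frac{P(M+1)}{P(K-1)+K}\right)> K\log_2\!\left(1+\frac{P(M-K+1)}{K}\right).$$ (Uplink) If $0<P_u<P_{\mathrm{cross,UL}}:=\frac{1}{M-1}$, then for every integer $K$ with $2\le K\le M$, $$K\log_2\!\left(1+\frac{P_uM}{P_u(K-1)+1}\right)> K\log_2\!\left(1+P_u(M-K+1)\right).$$
   Context: The left-hand sides are the paper's closed-form low-SNR ergodic sum-rate expressions for maximum ratio transmission with matrix normalization (downlink, total power $P$) and maximum ratio combining (uplink, per-user power $P_u$), and the right-hand sides are those for zero-forcing with vector normalization (downlink) and zero-forcing reception (uplink), for $M$ base-station antennas and $K$ single-antenna users. The lemma states that below the power cross point, MRT/MRC is better than ZF regardless of the number of active users. *)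

theory Defs
  imports Complex_Main
begin

end

theory Submission
  imports Defs
begin

text \<open>Since \<open>log 2 (1 + x)\<close> is increasing, it suffices to compare the SINRs inside the logarithms.
  After clearing denominators, the downlink comparison becomes \<open>P (K - 1) (M - K + 1) < K\<^sup>2\<close>,
  which follows from \<open>P (M - 1) < 4\<close> and \<open>4 (K - 1) \<le> K\<^sup>2\<close>; the uplink comparison becomes
  \<open>P (M - K + 1) < 1\<close>, which follows from \<open>P (M - 1) < 1\<close>.\<close>

lemma mult_log_one_plus_strict_mono:
  fixes a b K :: real
  assumes "0 \<le> a" "a < b" "0 < K"
  shows "K * log 2 (1 + a) < K * log 2 (1 + b)"
  using assms by simp

lemma downlink_sinr_less:
  fixes m k P :: real
  assumes "2 \<le> k" "k \<le> m" "0 < P" "P * (m - 1) < 4"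
  shows "P * (m - k + 1) / k < P * (m + 1) / (P * (k - 1) + k)"
proof -
  have interference_bound: "P * ((k - 1) * (m - k + 1)) < k * k"
  proof -
    have "P * (k - 1) * (m - k + 1) \<le> P * (k - 1) * (m - 1)"
      using assms by (intro mult_left_mono) auto
    then have "P * ((k - 1) * (m - k + 1)) \<le> (k - 1) * (P * (m - 1))"
      by (simp add: algebra_simps)
    also have "\<dots> < (k - 1) * 4"
      using assms by (intro mult_strict_left_mono) auto
    also have "\<dots> \<le> k * k"
      using zero_le_square[of "k - 2"] by (simp add: algebra_simps)
    finally show ?thesis .
  qed
  have "P * (m - k + 1) * (P * (k - 1) + k) < P * (m + 1) * k"
    using mult_strict_left_mono[OF interference_bound \<open>0 < P\<close>] by (simp add: algebra_simps)
  moreover have "0 < P * (k - 1) + k"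
    using assms by (simp add: add_nonneg_pos)
  ultimately show ?thesis
    using assms by (simp add: divide_simps mult.commute)
qed

lemma uplink_sinr_less:
  fixes m k P :: real
  assumes "2 \<le> k" "k \<le> m" "0 < P" "P * (m - 1) < 1"
  shows "P * (m - k + 1) < P * m / (P * (k - 1) + 1)"
proof -
  have "P * (m - k + 1) \<le> P * (m - 1)"
    using assms by (intro mult_left_mono) auto
  with assms have "P * (m - k + 1) < 1"
    by linarith
  moreover have "0 < P * (k - 1)"
    using assms by simp
  ultimately have "P * (k - 1) * (P * (m - k + 1)) < P * (k - 1) * 1"
    by (intro mult_strict_left_mono)
  then have "P * (m - k + 1) * (P * (k - 1) + 1) < P * m"
    by (simp add: algebra_simps)
  moreover have "0 < P * (k - 1) + 1"
    using assms by (simp add: add_nonneg_pos)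
  ultimately show ?thesis
    by (simp add: pos_less_divide_eq)
qed

theorem lemma8:
  fixes M :: nat
  assumes "M \<ge> 2"
  shows "(\<forall>P::real. 0 < P \<and> P < 4 / (real M - 1) \<longrightarrow>
            (\<forall>K::nat. 2 \<le> K \<and> K \<le> M \<longrightarrow>
              real K * log 2 (1 + P * (real M + 1) / (P * (real K - 1) + real K))
              > real K * log 2 (1 + P * (real M - real K + 1) / real K)))
       \<and> (\<forall>Pu::real. 0 < Pu \<and> Pu < 1 / (real M - 1) \<longrightarrow>
            (\<forall>K::nat. 2 \<le> K \<and> K \<le> M \<longrightarrow>
              real K * log 2 (1 + Pu * real M / (Pu * (real K - 1) + 1))
              > real K * log 2 (1 + Pu * (real M - real K + 1))))"
proof (intro conjI allI impI; elim conjE)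
  have "0 < real M - 1"
    using assms by simp
  fix P :: real and K :: nat
  assume K: "2 \<le> K" "K \<le> M" and "0 < P"
  then have "0 \<le> real M - real K + 1"
    by simp
  {
    assume "P < 4 / (real M - 1)"
    with \<open>0 < real M - 1\<close> have "P * (real M - 1) < 4"
      by (simp add: less_divide_eq)
    with K \<open>0 < P\<close> \<open>0 \<le> real M - real K + 1\<close> show
      "real K * log 2 (1 + P * (real M + 1) / (P * (real K - 1) + real K))
         > real K * log 2 (1 + P * (real M - real K + 1) / real K)"
      by (intro mult_log_one_plus_strict_mono downlink_sinr_less) auto
  next
    assume "P < 1 / (real M - 1)"
    with \<open>0 < real M - 1\<close> have "P * (real M - 1) < 1"
      by (simp add: less_divide_eq)
    with K \<open>0 < P\<close> \<open>0 \<le> real M - real K + 1\<close> show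
      "real K * log 2 (1 + P * real M / (P * (real K - 1) + 1))
         > real K * log 2 (1 + P * (real M - real K + 1))"
      by (intro mult_log_one_plus_strict_mono uplink_sinr_less) auto
  }
qed

end
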